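(* Let $E=\{e_1,\ldots,e_m\}$ be finite, $X_1,\ldots,X_n$ fuzzy subsets of $E$, and $\Phi_1,\ldots,\Phi_K$ Boolean combinations, $\Phi_j(Y_1,\ldots,Y_n)=Y_1^{(l_{j,1})}\cap\cdots\cap Y_n^{(l_{j,n})}$. Define the probability function on $\{0,\ldots,m\}^K$ $$f(i_1,\ldots,i_K)=\sum_{\substack{Y_1,\ldots,Y_n\in\mathcal{P}(E):\\ |\Phi_1(Y_1,\ldots,Y_n)|=i_1,\ldots,|\Phi_K(Y_1,\ldots,Y_n)|=i_K}} m_{X_1}(Y_1)\cdots m_{X_n}(Y_n).$$ Then for each $j\in\{1,\ldots,K\}$, the $j$-th marginal (projection) of $f$ is a Poisson binomial distribution with parameters $p^j_s=\mu_{X_1^{(l_{j,1})}\tilde\cap\cdots\tilde\cap X_n^{(l_{j,n})}}(e_s)$, $s=1,\ldots,m$, i.e. $p^j_s=\prod_{r=1}^n \mu_{X_r^{(l_{j,r})}}(e_s)$.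
   Context: For a fuzzy set $X$ on $E$ with membership $\mu_X:E\to[0,1]$ and crisp $Y\subseteq E$, $m_X(Y)=\prod_{e\in Y}\mu_X(e)\prod_{e\in E\setminus Y}(1-\mu_X(e))$. For crisp sets $Y^{(1)}=Y$, $Y^{(0)}=E\setminus Y$; for fuzzy sets $X^{(1)}=X$, $X^{(0)}=\tilde\neg X$ with $\mu_{\tilde\neg X}(e)=1-\mu_X(e)$, and $\tilde\cap$ is the pointwise product t-norm. The Poisson binomial distribution with parameters $p_1,\ldots,p_m$ is the distribution of the number of successes in $m$ independent Bernoulli trials with success probabilities $p_1,\ldots,p_m$: $\Pr(K=k)=\sum_{A\subseteq\{1,\ldots,m\},|A|=k}\prod_{i\in A}p_i\prod_{i\notin A}(1-p_i)$. *)

theory Defs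
  imports "HOL-Analysis.Analysis"
begin

definition fuzzy_set :: "'e set \<Rightarrow> ('e \<Rightarrow> real) \<Rightarrow> bool" where
  "fuzzy_set E mu \<longleftrightarrow> (\<forall>e\<in>E. 0 \<le> mu e \<and> mu e \<le> 1)"

definition mass :: "'e set \<Rightarrow> ('e \<Rightarrow> real) \<Rightarrow> 'e set \<Rightarrow> real" where
  "mass E mu Y = (\<Prod>e\<in>Y. mu e) * (\<Prod>e\<in>E - Y. 1 - mu e)"

text \<open>Crisp exponent: Y^(1) = Y, Y^(0) = E - Y (True encodes 1).\<close>
definition crisp_lit :: "'e set \<Rightarrow> bool \<Rightarrow> 'e set \<Rightarrow> 'e set" where
  "crisp_lit E b Y = (if b then Y else E - Y)"

definition fuzzy_lit :: "bool \<Rightarrow> ('e \<Rightarrow> real) \<Rightarrow> ('e \<Rightarrow> real)" where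
  "fuzzy_lit b mu = (if b then mu else (\<lambda>e. 1 - mu e))"

text \<open>Phi_j(Y_1..Y_n) = Y_1^(l_{j,1}) \<inter> ... \<inter> Y_n^(l_{j,n}); indices r < n, and
  the empty intersection (n = 0) is E.\<close>
definition Phi :: "'e set \<Rightarrow> nat \<Rightarrow> (nat \<Rightarrow> bool) \<Rightarrow> (nat \<Rightarrow> 'e set) \<Rightarrow> 'e set" where
  "Phi E n lj Y = E \<inter> (\<Inter>r\<in>{..<n}. crisp_lit E (lj r) (Y r))"

text \<open>Tuples (Y_1,...,Y_n) of crisp subsets of E, encoded as functions on {..<n}
  (extensional: undefined indices map to {}).\<close>
definition tuples :: "'e set \<Rightarrow> nat \<Rightarrow> (nat \<Rightarrow> 'e set) set" where
  "tuples E n = PiE {..<n} (\<lambda>_. Pow E)"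

text \<open>The joint probability function f on {0..m}^K; an argument (i_1..i_K) is a
  function i on {..<K}.\<close>
definition joint_f :: "'e set \<Rightarrow> nat \<Rightarrow> (nat \<Rightarrow> 'e \<Rightarrow> real) \<Rightarrow> nat \<Rightarrow> (nat \<Rightarrow> nat \<Rightarrow> bool)
    \<Rightarrow> (nat \<Rightarrow> nat) \<Rightarrow> real" where
  "joint_f E n X K l i =
     (\<Sum>Y\<in>{Y\<in>tuples E n. \<forall>j<K. card (Phi E n (l j) Y) = i j}.
        \<Prod>r<n. mass E (X r) (Y r))"

definition marginal :: "'e set \<Rightarrow> nat \<Rightarrow> (nat \<Rightarrow> 'e \<Rightarrow> real) \<Rightarrow> nat \<Rightarrow> (nat \<Rightarrow> nat \<Rightarrow> bool)
    \<Rightarrow> nat \<Rightarrow> nat \<Rightarrow> real" where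
  "marginal E n X K l j k =
     (\<Sum>i\<in>{i\<in>PiE {..<K} (\<lambda>_. {0..card E}). i j = k}. joint_f E n X K l i)"

text \<open>Poisson binomial distribution with success probabilities p(e), e in E
  (the trials are indexed by the elements e_1..e_m of E).\<close>
definition poisson_binomial :: "'e set \<Rightarrow> ('e \<Rightarrow> real) \<Rightarrow> nat \<Rightarrow> real" where
  "poisson_binomial E p k =
     (\<Sum>A\<in>{A. A \<subseteq> E \<and> card A = k}. (\<Prod>e\<in>A. p e) * (\<Prod>e\<in>E - A. 1 - p e))"

end

theory Submission imports Defs begin

text \<open>For each point e of E, record the vector of memberships (e \<in> Y r) for r < n. This is a
  bijection between tuples of crisp sets and E-indexed families of such patterns. Under it, the
  product of the masses m_(X r)(Y r) becomes a product over e of the weights of independent patterns,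
  and the event Phi(Y) = A becomes the product event "the pattern at e equals l exactly when
  e \<in> A". Summing the weights pointwise shows that Phi(Y) has the mass function m_p of the fuzzy
  intersection p of the literals X r^(l r); grouping by the cardinality of Phi(Y) then gives the
  Poisson binomial law. The identity is polynomial in the membership values.\<close>

definition fuzzy_Phi :: "nat \<Rightarrow> (nat \<Rightarrow> bool) \<Rightarrow> (nat \<Rightarrow> 'e \<Rightarrow> real) \<Rightarrow> 'e \<Rightarrow> real" where
  "fuzzy_Phi n lj X e = (\<Prod>r<n. fuzzy_lit (lj r) (X r) e)"

definition patterns :: "nat \<Rightarrow> (nat \<Rightarrow> bool) set" where
  "patterns n = PiE {..<n} (\<lambda>_. UNIV)"

definition membership_patterns :: "'e set \<Rightarrow> nat \<Rightarrow> (nat \<Rightarrow> 'e set) \<Rightarrow> 'e \<Rightarrow> nat \<Rightarrow> bool" where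
  "membership_patterns E n Y = (\<lambda>e\<in>E. \<lambda>r\<in>{..<n}. e \<in> Y r)"

lemma finite_tuples: "finite E \<Longrightarrow> finite (tuples E n)"
  by (simp add: tuples_def finite_PiE)

lemma finite_patterns: "finite (patterns n)"
  by (simp add: patterns_def finite_PiE)

lemma mass_eq_prod_fuzzy_lit:
  assumes "finite E" "Y \<subseteq> E"
  shows "mass E mu Y = (\<Prod>e\<in>E. fuzzy_lit (e \<in> Y) mu e)"
proof -
  have "E \<inter> {e. e \<in> Y} = Y" "E \<inter> - {e. e \<in> Y} = E - Y" using assms(2) by auto
  moreover have "fuzzy_lit (e \<in> Y) mu e = (if e \<in> Y then mu e else 1 - mu e)" for e
    by (simp add: fuzzy_lit_def)
  ultimately show ?thesis
    using prod.If_cases[OF assms(1), of "\<lambda>e. e \<in> Y" mu "\<lambda>e. 1 - mu e"]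
    by (simp add: mass_def)
qed

lemma poisson_binomial_eq_sum_mass:
  "poisson_binomial E p k = (\<Sum>A\<in>{A. A \<subseteq> E \<and> card A = k}. mass E p A)"
  by (simp add: poisson_binomial_def mass_def)

lemma fuzzy_Phi_cong:
  "(\<And>r. r < n \<Longrightarrow> lj r = lj' r) \<Longrightarrow> fuzzy_Phi n lj X e = fuzzy_Phi n lj' X e"
  by (simp add: fuzzy_Phi_def)

lemma sum_fuzzy_Phi_patterns: "(\<Sum>b\<in>patterns n. fuzzy_Phi n b X e) = 1"
proof -
  have "(\<Sum>b\<in>patterns n. fuzzy_Phi n b X e) = (\<Prod>r<n. \<Sum>t\<in>UNIV. fuzzy_lit t (X r) e)"
    unfolding patterns_def fuzzy_Phi_def by (rule prod_sum_PiE[symmetric]) auto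
  also have "\<dots> = 1" by (simp add: UNIV_bool fuzzy_lit_def)
  finally show ?thesis .
qed

lemma prod_mass_eq_prod_fuzzy_Phi:
  assumes "finite E" "Y \<in> tuples E n"
  shows "(\<Prod>r<n. mass E (X r) (Y r)) = (\<Prod>e\<in>E. fuzzy_Phi n (membership_patterns E n Y e) X e)"
proof -
  have "(\<Prod>r<n. mass E (X r) (Y r)) = (\<Prod>r<n. \<Prod>e\<in>E. fuzzy_lit (e \<in> Y r) (X r) e)"
    using assms by (intro prod.cong refl mass_eq_prod_fuzzy_lit) (auto simp: tuples_def)
  also have "\<dots> = (\<Prod>e\<in>E. \<Prod>r<n. fuzzy_lit (e \<in> Y r) (X r) e)"
    by (rule prod.swap)
  also have "\<dots> = (\<Prod>e\<in>E. fuzzy_Phi n (membership_patterns E n Y e) X e)"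
    by (intro prod.cong refl) (simp add: fuzzy_Phi_def membership_patterns_def)
  finally show ?thesis .
qed

lemma bij_betw_membership_patterns:
  "bij_betw (membership_patterns E n) (tuples E n) (PiE E (\<lambda>_. patterns n))"
proof (rule bij_betw_byWitness[where f' = "\<lambda>G. \<lambda>r\<in>{..<n}. {e\<in>E. G e r}"])
  show "\<forall>Y\<in>tuples E n. (\<lambda>r\<in>{..<n}. {e\<in>E. membership_patterns E n Y e r}) = Y"
    by (auto simp: tuples_def membership_patterns_def PiE_iff fun_eq_iff extensional_def)
  show "\<forall>G\<in>PiE E (\<lambda>_. patterns n). membership_patterns E n (\<lambda>r\<in>{..<n}. {e\<in>E. G e r}) = G"
    by (auto simp: patterns_def membership_patterns_def PiE_iff fun_eq_iff extensional_def)
qed (auto simp: tuples_def patterns_def membership_patterns_def PiE_iff)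

lemma Phi_eq_membership_patterns:
  "Phi E n lj Y = {e\<in>E. membership_patterns E n Y e = restrict lj {..<n}}"
  by (auto simp: Phi_def crisp_lit_def membership_patterns_def fun_eq_iff)

lemma sum_fuzzy_Phi_pattern_event:
  "(\<Sum>b\<in>{b\<in>patterns n. (b = restrict lj {..<n}) = P}. fuzzy_Phi n b X e)
     = fuzzy_lit P (fuzzy_Phi n lj X) e"
proof -
  define l0 where "l0 = restrict lj {..<n}"
  have l0: "l0 \<in> patterns n" by (simp add: l0_def patterns_def)
  have "fuzzy_Phi n l0 X e = fuzzy_Phi n lj X e"
    by (rule fuzzy_Phi_cong) (simp add: l0_def)
  moreover have "{b\<in>patterns n. b = l0} = {l0}" "{b\<in>patterns n. b \<noteq> l0} = patterns n - {l0}"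
    using l0 by auto
  ultimately show ?thesis
    using l0 sum_diff1[of "patterns n" "\<lambda>b. fuzzy_Phi n b X e" l0]
    by (cases P) (simp_all add: l0_def [symmetric] fuzzy_lit_def finite_patterns sum_fuzzy_Phi_patterns)
qed

lemma sum_prod_mass_Phi_eq_mass:
  assumes fin: "finite E" and "A \<subseteq> E"
  shows "(\<Sum>Y\<in>{Y\<in>tuples E n. Phi E n lj Y = A}. \<Prod>r<n. mass E (X r) (Y r))
           = mass E (fuzzy_Phi n lj X) A"
proof -
  define Q where "Q e b \<longleftrightarrow> (b = restrict lj {..<n}) = (e \<in> A)" for e b
  define F where "F G = (\<Prod>e\<in>E. fuzzy_Phi n (G e) X e)" for G
  have event: "Phi E n lj Y = A \<longleftrightarrow> (\<forall>e\<in>E. Q e (membership_patterns E n Y e))" for Y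
    using \<open>A \<subseteq> E\<close> by (auto simp: Phi_eq_membership_patterns Q_def)
  have "(\<Sum>Y\<in>{Y\<in>tuples E n. Phi E n lj Y = A}. \<Prod>r<n. mass E (X r) (Y r))
      = (\<Sum>Y\<in>tuples E n. if \<forall>e\<in>E. Q e (membership_patterns E n Y e)
                           then F (membership_patterns E n Y) else 0)"
    by (simp add: sum.inter_filter[symmetric] finite_tuples[OF fin] event F_def)
      (intro sum.cong refl prod_mass_eq_prod_fuzzy_Phi[OF fin], simp)
  also have "\<dots> = (\<Sum>G\<in>PiE E (\<lambda>_. patterns n). if \<forall>e\<in>E. Q e (G e) then F G else 0)"
    by (rule sum.reindex_bij_betw[OF bij_betw_membership_patterns])
  also have "\<dots> = (\<Sum>G\<in>PiE E (\<lambda>e. {b\<in>patterns n. Q e b}). F G)"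
    by (simp add: sum.inter_filter[symmetric] fin finite_PiE finite_patterns)
      (intro sum.cong refl, auto simp: PiE_iff extensional_def)
  also have "\<dots> = (\<Prod>e\<in>E. \<Sum>b\<in>{b\<in>patterns n. Q e b}. fuzzy_Phi n b X e)"
    unfolding F_def by (rule prod_sum_PiE[symmetric]) (simp_all add: fin finite_patterns)
  also have "\<dots> = (\<Prod>e\<in>E. fuzzy_lit (e \<in> A) (fuzzy_Phi n lj X) e)"
    unfolding Q_def by (simp only: sum_fuzzy_Phi_pattern_event)
  also have "\<dots> = mass E (fuzzy_Phi n lj X) A"
    by (rule mass_eq_prod_fuzzy_lit[symmetric]) fact+
  finally show ?thesis .
qed

lemma card_Phi_le: "finite E \<Longrightarrow> card (Phi E n lj Y) \<le> card E"
  by (rule card_mono) (auto simp: Phi_def)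

lemma marginal_eq_sum_tuples:
  assumes fin: "finite E" and "j < K"
  shows "marginal E n X K l j k
           = (\<Sum>Y\<in>{Y\<in>tuples E n. card (Phi E n (l j) Y) = k}. \<Prod>r<n. mass E (X r) (Y r))"
proof -
  define S where "S = {Y\<in>tuples E n. card (Phi E n (l j) Y) = k}"
  define T where "T = {i\<in>PiE {..<K} (\<lambda>_. {0..card E}). i j = k}"
  define cards where "cards Y = (\<lambda>j'\<in>{..<K}. card (Phi E n (l j') Y))" for Y
  define M where "M Y = (\<Prod>r<n. mass E (X r) (Y r))" for Y
  have fibre: "{Y\<in>tuples E n. \<forall>j'<K. card (Phi E n (l j') Y) = i j'} = {Y\<in>S. cards Y = i}"
    if "i \<in> T" for i
    using that \<open>j < K\<close> by (auto simp: S_def T_def cards_def PiE_iff fun_eq_iff extensional_def)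
  have "marginal E n X K l j k = (\<Sum>i\<in>T. \<Sum>Y\<in>{Y\<in>S. cards Y = i}. M Y)"
    unfolding marginal_def joint_f_def T_def[symmetric] M_def by (simp add: fibre)
  also have "\<dots> = (\<Sum>Y\<in>S. M Y)"
  proof (rule sum.group)
    show "finite S" by (simp add: S_def finite_tuples[OF fin])
    show "finite T" by (simp add: T_def finite_PiE)
    show "cards ` S \<subseteq> T"
      using \<open>j < K\<close> card_Phi_le[OF fin] by (auto simp: cards_def S_def T_def PiE_iff)
  qed
  finally show ?thesis by (simp add: S_def M_def)
qed

lemma sum_card_Phi_eq_poisson_binomial:
  assumes fin: "finite E"
  shows "(\<Sum>Y\<in>{Y\<in>tuples E n. card (Phi E n lj Y) = k}. \<Prod>r<n. mass E (X r) (Y r))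
           = poisson_binomial E (fuzzy_Phi n lj X) k"
proof -
  define S where "S = {Y\<in>tuples E n. card (Phi E n lj Y) = k}"
  define P where "P = {A. A \<subseteq> E \<and> card A = k}"
  define M where "M Y = (\<Prod>r<n. mass E (X r) (Y r))" for Y
  have fibre: "{Y\<in>S. Phi E n lj Y = A} = {Y\<in>tuples E n. Phi E n lj Y = A}" if "A \<in> P" for A
    using that by (auto simp: S_def P_def)
  have "(\<Sum>Y\<in>S. M Y) = (\<Sum>A\<in>P. \<Sum>Y\<in>{Y\<in>S. Phi E n lj Y = A}. M Y)"
  proof (rule sum.group[symmetric])
    show "finite S" by (simp add: S_def finite_tuples[OF fin])
    show "finite P" by (simp add: P_def fin)
    show "Phi E n lj ` S \<subseteq> P" by (auto simp: S_def P_def Phi_def)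
  qed
  also have "\<dots> = (\<Sum>A\<in>P. mass E (fuzzy_Phi n lj X) A)"
    using fin by (intro sum.cong refl) (simp add: fibre M_def sum_prod_mass_Phi_eq_mass P_def)
  finally show ?thesis by (simp add: S_def P_def M_def poisson_binomial_eq_sum_mass)
qed

theorem theorem2:
  fixes E :: "'e set" and n K :: nat
    and X :: "nat \<Rightarrow> 'e \<Rightarrow> real"
    and l :: "nat \<Rightarrow> nat \<Rightarrow> bool"
  assumes "finite E"
    and "\<And>r. r < n \<Longrightarrow> fuzzy_set E (X r)"
    and "j < K"
  shows "\<forall>k \<le> card E.
           marginal E n X K l j k
             = poisson_binomial E (\<lambda>e. \<Prod>r<n. fuzzy_lit (l j r) (X r) e) k"
  using marginal_eq_sum_tuples[OF assms(1,3)] sum_card_Phi_eq_poisson_binomial[OF assms(1)]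
  by (simp add: fuzzy_Phi_def [abs_def])

end
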